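(* Let $G$ be a finite non-abelian group such that the non-centralizer graph $\Upsilon_G$ is $n$-regular. Then $n$ is even, $|G|\equiv 0\pmod 8$, and $n+2\leq |G|\leq 4n/3$.
   Context: For a finite group $G$, $C_G(x)$ denotes the centralizer of $x\in G$. The non-centralizer graph $\Upsilon_G$ is the simple graph with vertex set $G$ in which two distinct vertices $x,y$ are adjacent if and only if $C_G(x)\neq C_G(y)$. A graph is $n$-regular if every vertex has degree exactly $n$. *)

theory Defs
  imports "HOL-Algebra.Group"
begin

definition centralizer :: "('a, 'b) monoid_scheme \<Rightarrow> 'a \<Rightarrow> 'a set" where
  "centralizer G x = {y \<in> carrier G. x \<otimes>\<^bsub>G\<^esub> y = y \<otimes>\<^bsub>G\<^esub> x}"

definition noncentralizer_adj :: "('a, 'b) monoid_scheme \<Rightarrow> 'a \<Rightarrow> 'a \<Rightarrow> bool" where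
  "noncentralizer_adj G x y \<longleftrightarrow> x \<in> carrier G \<and> y \<in> carrier G \<and> x \<noteq> y \<and> centralizer G x \<noteq> centralizer G y"

definition noncentralizer_degree :: "('a, 'b) monoid_scheme \<Rightarrow> 'a \<Rightarrow> nat" where
  "noncentralizer_degree G x = card {y \<in> carrier G. noncentralizer_adj G x y}"

definition noncentralizer_regular :: "('a, 'b) monoid_scheme \<Rightarrow> nat \<Rightarrow> bool" where
  "noncentralizer_regular G n \<longleftrightarrow> (\<forall>x \<in> carrier G. noncentralizer_degree G x = n)"

end

(*
  Vertex x of the non-centralizer graph is non-adjacent exactly to the elements whose
  centralizer equals C(x); so in an n-regular graph all these classes have |G| - n elements.
  The class of 1 is the centre Z, and the class of x contains the coset Zx, hence equals it.
  As x^-1 has the centralizer of x, x^-1 lies in Zx: every square is central.  Consequently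
  every commutator c of a non-commuting pair x, y is central with c^2 = 1, which makes
  |Z| even, and Z u Zx u Zy u Zxy is a subgroup of order 4|Z|.  Hence 8 divides |G|, and
  n = |G| - |Z| with 2 <= |Z| <= |G|/4.
*)
theory Submission
  imports Defs "HOL-Algebra.Coset"
begin

definition center :: "('a, 'b) monoid_scheme \<Rightarrow> 'a set" where
  "center G = {z \<in> carrier G. \<forall>g \<in> carrier G. z \<otimes>\<^bsub>G\<^esub> g = g \<otimes>\<^bsub>G\<^esub> z}"

definition centralizer_class :: "('a, 'b) monoid_scheme \<Rightarrow> 'a \<Rightarrow> 'a set" where
  "centralizer_class G x = {y \<in> carrier G. centralizer G y = centralizer G x}"

lemma noncentralizer_degree_eq:
  assumes "finite (carrier G)" and "x \<in> carrier G"
  shows "noncentralizer_degree G x = card (carrier G) - card (centralizer_class G x)"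
proof -
  have "{y \<in> carrier G. noncentralizer_adj G x y} = carrier G - centralizer_class G x"
    using assms(2) by (auto simp: noncentralizer_adj_def centralizer_class_def)
  moreover have "centralizer_class G x \<subseteq> carrier G"
    by (auto simp: centralizer_class_def)
  ultimately show ?thesis
    using assms(1) by (simp add: noncentralizer_degree_def card_Diff_subset finite_subset)
qed

context group
begin

lemma center_subset_carrier: "center G \<subseteq> carrier G"
  by (auto simp: center_def)

lemma centerD: "z \<in> center G \<Longrightarrow> g \<in> carrier G \<Longrightarrow> z \<otimes> g = g \<otimes> z"
  by (auto simp: center_def)

lemma commute_inv:
  assumes x: "x \<in> carrier G" and y: "y \<in> carrier G" and xy: "x \<otimes> y = y \<otimes> x"
  shows "inv x \<otimes> y = y \<otimes> inv x"
proof -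
  have "inv x \<otimes> y = inv x \<otimes> (y \<otimes> x) \<otimes> inv x"
    using x y by (simp add: m_assoc)
  also have "\<dots> = inv x \<otimes> (x \<otimes> y) \<otimes> inv x"
    by (simp only: xy)
  also have "\<dots> = y \<otimes> inv x"
    using x y by (simp flip: m_assoc)
  finally show ?thesis .
qed

lemma center_left_commute:
  assumes z: "z \<in> center G" and x: "x \<in> carrier G" and y: "y \<in> carrier G"
  shows "x \<otimes> (z \<otimes> y) = z \<otimes> (x \<otimes> y)"
proof -
  have zG: "z \<in> carrier G" using z center_subset_carrier by blast
  have "x \<otimes> (z \<otimes> y) = x \<otimes> z \<otimes> y" using x y zG by (simp add: m_assoc)
  also have "\<dots> = z \<otimes> x \<otimes> y" by (simp only: centerD[OF z x])
  also have "\<dots> = z \<otimes> (x \<otimes> y)" using x y zG by (simp add: m_assoc)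
  finally show ?thesis .
qed

lemma subgroup_center: "subgroup (center G) G"
proof (rule subgroupI)
  show "center G \<subseteq> carrier G" by (rule center_subset_carrier)
  show "center G \<noteq> {}" by (auto simp: center_def)
next
  fix z assume z: "z \<in> center G"
  then have zG: "z \<in> carrier G" by (simp add: center_def)
  have "inv z \<otimes> g = g \<otimes> inv z" if g: "g \<in> carrier G" for g
    using commute_inv[OF zG g centerD[OF z g]] .
  then show "inv z \<in> center G" using zG by (simp add: center_def)
next
  fix z w assume z: "z \<in> center G" and w: "w \<in> center G"
  then have G: "z \<in> carrier G" "w \<in> carrier G" by (simp_all add: center_def)
  have "z \<otimes> w \<otimes> g = g \<otimes> (z \<otimes> w)" if g: "g \<in> carrier G" for g
    using G g centerD[OF z g] centerD[OF w g] by (metis m_assoc)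
  then show "z \<otimes> w \<in> center G" using G by (simp add: center_def)
qed

lemma centralizer_eq_carrier_iff:
  "x \<in> carrier G \<Longrightarrow> centralizer G x = carrier G \<longleftrightarrow> x \<in> center G"
  by (auto simp: centralizer_def center_def)

lemma centralizer_class_one: "centralizer_class G \<one> = center G"
proof -
  have one: "centralizer G \<one> = carrier G" by (auto simp: centralizer_def)
  show ?thesis
    unfolding centralizer_class_def one using centralizer_eq_carrier_iff center_subset_carrier by blast
qed

lemma centralizer_mult_center:
  assumes "z \<in> center G" and "x \<in> carrier G"
  shows "centralizer G (z \<otimes> x) = centralizer G x"
proof -
  have zG: "z \<in> carrier G" using assms(1) center_subset_carrier by blast
  have "z \<otimes> x \<otimes> y = y \<otimes> (z \<otimes> x) \<longleftrightarrow> x \<otimes> y = y \<otimes> x" if y: "y \<in> carrier G" for y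
    using zG assms(2) y center_left_commute[OF assms(1) y assms(2)] by (simp add: m_assoc)
  then show ?thesis by (auto simp: centralizer_def)
qed

lemma centralizer_inv:
  assumes "x \<in> carrier G"
  shows "centralizer G (inv x) = centralizer G x"
proof -
  have "inv x \<otimes> y = y \<otimes> inv x \<longleftrightarrow> x \<otimes> y = y \<otimes> x" if y: "y \<in> carrier G" for y
    using assms y commute_inv[of x y] commute_inv[of "inv x" y] by auto
  then show ?thesis by (auto simp: centralizer_def)
qed

lemma rcos_center_subset_centralizer_class:
  "x \<in> carrier G \<Longrightarrow> center G #> x \<subseteq> centralizer_class G x"
  using center_subset_carrier
  by (auto simp: r_coset_def centralizer_class_def centralizer_mult_center)

lemma regular_centralizer_class_eq:
  assumes fin: "finite (carrier G)" and reg: "noncentralizer_regular G n"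
    and x: "x \<in> carrier G"
  shows "centralizer_class G x = center G #> x"
proof -
  have class_sub: "centralizer_class G u \<subseteq> carrier G" for u
    by (auto simp: centralizer_class_def)
  have "noncentralizer_degree G x = noncentralizer_degree G \<one>"
    using reg x by (simp add: noncentralizer_regular_def)
  then have "card (carrier G) - card (centralizer_class G x) = card (carrier G) - card (center G)"
    using noncentralizer_degree_eq[OF fin x] noncentralizer_degree_eq[OF fin one_closed]
    by (simp add: centralizer_class_one)
  then have "card (centralizer_class G x) = card (center G)"
    using card_mono[OF fin class_sub[of x]] card_mono[OF fin center_subset_carrier] by linarith
  also have "\<dots> = card (center G #> x)"
    by (rule card_rcosets_equal[OF rcosetsI[OF center_subset_carrier x] center_subset_carrier])
  finally have "card (center G #> x) = card (centralizer_class G x)" by (rule sym)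
  from card_subset_eq[OF finite_subset[OF class_sub fin] rcos_center_subset_centralizer_class[OF x] this]
  show ?thesis by (rule sym)
qed

lemma regular_square_in_center:
  assumes "finite (carrier G)" and "noncentralizer_regular G n" and x: "x \<in> carrier G"
  shows "x \<otimes> x \<in> center G"
proof -
  have "inv x \<in> centralizer_class G x"
    using x centralizer_inv by (simp add: centralizer_class_def)
  then obtain z where z: "z \<in> center G" and inv_x: "inv x = z \<otimes> x"
    using regular_centralizer_class_eq[OF assms] by (auto simp: r_coset_def)
  have "z = z \<otimes> x \<otimes> inv x"
    using x z center_subset_carrier by (auto simp: m_assoc)
  then have "z = inv x \<otimes> inv x"
    by (simp only: inv_x)
  then have "x \<otimes> x = inv z"
    using x by (simp add: inv_mult_group)
  then show ?thesis
    using z subgroup.m_inv_closed[OF subgroup_center] by simp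
qed

lemma inv_eq_inv_square_mult: "u \<in> carrier G \<Longrightarrow> inv u = inv (u \<otimes> u) \<otimes> u"
  by (simp add: inv_mult_group m_assoc)

lemma commutator_in_center:
  assumes sq: "\<And>u. u \<in> carrier G \<Longrightarrow> u \<otimes> u \<in> center G"
    and a: "a \<in> carrier G" and b: "b \<in> carrier G"
  shows "\<exists>c \<in> center G. b \<otimes> a = c \<otimes> (a \<otimes> b)"
proof -
  let ?s = "(a \<otimes> b) \<otimes> (a \<otimes> b)"
  let ?c = "?s \<otimes> inv (a \<otimes> a) \<otimes> inv (b \<otimes> b)"
  have s: "?s \<in> center G" using sq a b by simp
  have zb: "inv (b \<otimes> b) \<in> center G"
    using sq b subgroup.m_inv_closed[OF subgroup_center] by blast
  have c: "?c \<in> center G"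
    using sq a b s zb subgroup_center by (simp add: subgroup.m_closed subgroup.m_inv_closed)
  have "b \<otimes> a = ?c \<otimes> (a \<otimes> b)"
  proof -
    have "b \<otimes> a = inv a \<otimes> ?s \<otimes> inv b"
      using a b by (simp add: m_assoc inv_solve_left)
    also have "\<dots> = ?s \<otimes> inv a \<otimes> inv b"
      by (simp only: centerD[OF s inv_closed[OF a]])
    also have "\<dots> = ?s \<otimes> (inv (a \<otimes> a) \<otimes> a) \<otimes> (inv (b \<otimes> b) \<otimes> b)"
      by (simp only: inv_eq_inv_square_mult[OF a, symmetric] inv_eq_inv_square_mult[OF b, symmetric])
    also have "\<dots> = ?s \<otimes> inv (a \<otimes> a) \<otimes> (a \<otimes> (inv (b \<otimes> b) \<otimes> b))"
      using a b by (simp add: m_assoc)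
    also have "\<dots> = ?s \<otimes> inv (a \<otimes> a) \<otimes> (inv (b \<otimes> b) \<otimes> (a \<otimes> b))"
      by (simp only: center_left_commute[OF zb a b])
    also have "\<dots> = ?c \<otimes> (a \<otimes> b)"
      using a b by (simp add: m_assoc)
    finally show ?thesis .
  qed
  with c show ?thesis by (rule bexI[rotated])
qed

lemma central_commutator_square_eq_one:
  assumes a: "a \<in> carrier G" and b: "b \<in> carrier G" and aa: "a \<otimes> a \<in> center G"
    and c: "c \<in> center G" and ba: "b \<otimes> a = c \<otimes> (a \<otimes> b)"
  shows "c \<otimes> c = \<one>"
proof -
  have cG: "c \<in> carrier G" using c center_subset_carrier by blast
  have "b \<otimes> (a \<otimes> a) = (c \<otimes> (a \<otimes> b)) \<otimes> a"
    using a b ba by (simp flip: m_assoc)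
  also have "\<dots> = c \<otimes> a \<otimes> (b \<otimes> a)"
    using a b cG by (simp add: m_assoc)
  also have "\<dots> = c \<otimes> (a \<otimes> c) \<otimes> (a \<otimes> b)"
    using a b cG ba by (simp add: m_assoc)
  also have "\<dots> = (c \<otimes> c) \<otimes> ((a \<otimes> a) \<otimes> b)"
    using a b cG centerD[OF c a, symmetric] by (simp add: m_assoc)
  also have "\<dots> = (c \<otimes> c) \<otimes> (b \<otimes> (a \<otimes> a))"
    using centerD[OF aa b] by simp
  finally show ?thesis
    using a b cG by simp
qed


lemma normal_if_center_subset:
  assumes comm: "\<And>a b. a \<in> carrier G \<Longrightarrow> b \<in> carrier G \<Longrightarrow> \<exists>c \<in> center G. b \<otimes> a = c \<otimes> (a \<otimes> b)"
    and N: "subgroup N G" and ZN: "center G \<subseteq> N"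
  shows "N \<lhd> G"
proof (rule normal_invI[OF N])
  fix g h assume g: "g \<in> carrier G" and h: "h \<in> N"
  have hG: "h \<in> carrier G" using h subgroup.subset[OF N] by blast
  obtain c where c: "c \<in> center G" and hg: "g \<otimes> h = c \<otimes> (h \<otimes> g)"
    using comm[OF hG g] by blast
  have cG: "c \<in> carrier G" using c center_subset_carrier by blast
  have "g \<otimes> h \<otimes> inv g = c \<otimes> (h \<otimes> g) \<otimes> inv g" by (simp only: hg)
  also have "\<dots> = c \<otimes> h" using g hG cG by (simp add: m_assoc)
  finally have "g \<otimes> h \<otimes> inv g = c \<otimes> h" .
  then show "g \<otimes> h \<otimes> inv g \<in> N"
    using c ZN h subgroup.m_closed[OF N] by auto
qed

lemma subgroup_Un_rcos:
  assumes N: "N \<lhd> G" and g: "g \<in> carrier G" and gg: "g \<otimes> g \<in> N"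
  shows "subgroup (N \<union> (N #> g)) G"
proof -
  interpret N: normal N G by (rule N)
  let ?U = "N \<union> (N #> g)"
  have NG: "N \<subseteq> carrier G" by (rule N.subset)
  have U_sub: "?U \<subseteq> carrier G" using NG r_coset_subset_G[OF NG g] by (rule Un_least)
  have U_cases: "x \<in> N \<or> (\<exists>m \<in> N. x = m \<otimes> g)" if "x \<in> ?U" for x
    using that by (auto simp: r_coset_def)
  have rcos_mem: "m \<otimes> g \<in> ?U" if "m \<in> N" for m
    using rcosI[OF that NG g] by blast
  have mult_g: "x \<otimes> g \<in> ?U" if x: "x \<in> ?U" for x
  proof -
    { fix m assume m: "m \<in> N" "x = m \<otimes> g"
      then have "x \<otimes> g = m \<otimes> (g \<otimes> g)" using g NG by (auto simp: m_assoc)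
      then have ?thesis using m gg by simp }
    then show ?thesis using U_cases[OF x] rcos_mem by blast
  qed
  have mult_N: "x \<otimes> n \<in> ?U" if x: "x \<in> ?U" and n: "n \<in> N" for x n
  proof -
    { fix m assume m: "m \<in> N" "x = m \<otimes> g"
      have "g \<otimes> n = (g \<otimes> n \<otimes> inv g) \<otimes> g" using g n NG by (auto simp: m_assoc)
      then have "x \<otimes> n = (m \<otimes> (g \<otimes> n \<otimes> inv g)) \<otimes> g"
        using m g n NG by (auto simp: m_assoc)
      then have ?thesis using rcos_mem m N.inv_op_closed2[OF g n] by simp }
    then show ?thesis using U_cases[OF x] n by blast
  qed
  show ?thesis
  proof (rule subgroupI)
    show "?U \<subseteq> carrier G" by (rule U_sub)
    show "?U \<noteq> {}" using N.one_closed by blast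
  next
    fix a assume a: "a \<in> ?U"
    { fix m assume m: "m \<in> N" "a = m \<otimes> g"
      have "inv (g \<otimes> g) \<otimes> g \<in> ?U" using mult_g N.m_inv_closed[OF gg] by blast
      moreover have "inv a = inv (g \<otimes> g) \<otimes> g \<otimes> inv m"
        using m g NG by (auto simp: inv_mult_group m_assoc)
      ultimately have "inv a \<in> ?U" using mult_N N.m_inv_closed[OF m(1)] by simp }
    then show "inv a \<in> ?U" using U_cases[OF a] by blast
  next
    fix a b assume a: "a \<in> ?U" and b: "b \<in> ?U"
    { fix m assume m: "m \<in> N" "b = m \<otimes> g"
      then have "a \<otimes> b = a \<otimes> m \<otimes> g" using subsetD[OF U_sub a] g NG by (auto simp: m_assoc)
      then have "a \<otimes> b \<in> ?U" using mult_g mult_N a m by simp }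
    then show "a \<otimes> b \<in> ?U" using U_cases[OF b] mult_N a by blast
  qed
qed

lemma card_Un_rcos:
  assumes N: "subgroup N G" and g: "g \<in> carrier G" "g \<notin> N"
  shows "card (N \<union> (N #> g)) = 2 * card N"
proof (cases "finite N")
  case True
  have NG: "N \<subseteq> carrier G" by (rule subgroup.subset[OF N])
  have "N \<noteq> N #> g" using rcos_self[OF g(1) N] g(2) by blast
  moreover have "N \<in> rcosets N"
    using rcosetsI[OF NG one_closed] NG by simp
  ultimately have "disjnt N (N #> g)"
    using pairwiseD[OF rcos_disjoint[OF N]] rcosetsI[OF NG g(1)] by blast
  then have "N \<inter> (N #> g) = {}" by (simp add: disjnt_def)
  moreover have "card (N #> g) = card N"
    using card_rcosets_equal[OF rcosetsI[OF NG g(1)] NG] by simp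
  moreover have "finite (N #> g)"
    using rcosets_finite[OF rcosetsI[OF NG g(1)] NG True] .
  ultimately show ?thesis using True by (simp add: card_Un_disjoint)
qed simp

lemma card_center_pos: "finite (carrier G) \<Longrightarrow> card (center G) > 0"
  using finite_subset[OF center_subset_carrier] subgroup.one_closed[OF subgroup_center]
  by (auto simp: card_gt_0_iff)

lemma card_subgroup_dvd_order: "subgroup H G \<Longrightarrow> card H dvd order G"
  unfolding lagrange[symmetric] by simp

lemma involution_imp_even_order:
  assumes c: "c \<in> carrier G" "c \<noteq> \<one>" "c \<otimes> c = \<one>"
  shows "even (order G)"
proof -
  have "c \<otimes> c \<in> {\<one>}" using c(3) by simp
  then have "card ({\<one>} \<union> ({\<one>} #> c)) dvd order G"
    by (rule card_subgroup_dvd_order[OF subgroup_Un_rcos[OF one_is_normal c(1)]])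
  moreover have "card ({\<one>} \<union> ({\<one>} #> c)) = 2"
    using card_Un_rcos[OF triv_subgroup c(1)] c(2) by simp
  ultimately show ?thesis by simp
qed

lemma four_card_center_dvd_order:
  assumes sq: "\<And>u. u \<in> carrier G \<Longrightarrow> u \<otimes> u \<in> center G"
    and x: "x \<in> carrier G" and y: "y \<in> carrier G" and xy: "x \<otimes> y \<noteq> y \<otimes> x"
  shows "4 * card (center G) dvd order G"
proof -
  let ?Z = "center G"
  let ?N = "?Z \<union> (?Z #> x)"
  note comm = commutator_in_center[OF sq]
  have Z_normal: "?Z \<lhd> G"
    by (rule normal_if_center_subset[OF comm subgroup_center subset_refl])
  have "x \<notin> ?Z" using centerD[OF _ y] xy by blast
  then have card_N: "card ?N = 2 * card ?Z"
    by (rule card_Un_rcos[OF subgroup_center x])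
  have N_subgroup: "subgroup ?N G"
    by (rule subgroup_Un_rcos[OF Z_normal x sq[OF x]])
  have N_normal: "?N \<lhd> G"
    by (rule normal_if_center_subset[OF comm N_subgroup Un_upper1])
  have "y \<notin> ?N"
  proof
    assume "y \<in> ?N"
    then consider "y \<in> ?Z" | z where "z \<in> ?Z" "y = z \<otimes> x"
      by (auto simp: r_coset_def)
    then have "x \<otimes> y = y \<otimes> x"
    proof cases
      case 1
      then show ?thesis using centerD[OF _ x] by simp
    next
      case 2
      have zG: "z \<in> carrier G" using 2(1) center_subset_carrier by blast
      have "x \<otimes> y = z \<otimes> (x \<otimes> x)"
        using 2 center_left_commute[OF 2(1) x x] by simp
      also have "\<dots> = y \<otimes> x"
        using 2(2) x zG by (simp add: m_assoc)
      finally show ?thesis .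
    qed
    with xy show False ..
  qed
  then have card_M: "card (?N \<union> (?N #> y)) = 2 * card ?N"
    by (rule card_Un_rcos[OF N_subgroup y])
  have "y \<otimes> y \<in> ?N" using sq[OF y] by blast
  then have "card (?N \<union> (?N #> y)) dvd order G"
    by (rule card_subgroup_dvd_order[OF subgroup_Un_rcos[OF N_normal y]])
  then show ?thesis using card_M card_N by simp
qed

lemma even_card_center:
  assumes sq: "\<And>u. u \<in> carrier G \<Longrightarrow> u \<otimes> u \<in> center G"
    and x: "x \<in> carrier G" and y: "y \<in> carrier G" and xy: "x \<otimes> y \<noteq> y \<otimes> x"
  shows "even (card (center G))"
proof -
  interpret Z: group "G\<lparr>carrier := center G\<rparr>"
    by (rule subgroup.subgroup_is_group[OF subgroup_center is_group])
  obtain c where c: "c \<in> center G" and yx: "y \<otimes> x = c \<otimes> (x \<otimes> y)"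
    using commutator_in_center[OF sq x y] by blast
  have "c \<noteq> \<one>" using yx xy x y by auto
  moreover have "c \<otimes> c = \<one>"
    by (rule central_commutator_square_eq_one[OF x y sq[OF x] c yx])
  ultimately have "even (order (G\<lparr>carrier := center G\<rparr>))"
    using Z.involution_imp_even_order c by simp
  then show ?thesis by (simp add: order_def)
qed

end

theorem theorem2p12:
  fixes G :: "('a, 'b) monoid_scheme" and n :: nat
  assumes "group G" and "finite (carrier G)" and "\<not> comm_group G"
    and "noncentralizer_regular G n"
  shows "even n \<and> 8 dvd card (carrier G) \<and> n + 2 \<le> card (carrier G) \<and> 3 * card (carrier G) \<le> 4 * n"
proof -
  interpret group G by (rule assms(1))
  obtain x y where x: "x \<in> carrier G" and y: "y \<in> carrier G" and xy: "x \<otimes>\<^bsub>G\<^esub> y \<noteq> y \<otimes>\<^bsub>G\<^esub> x"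
    using assms(3) group_comm_groupI by blast
  have sq: "\<And>u. u \<in> carrier G \<Longrightarrow> u \<otimes>\<^bsub>G\<^esub> u \<in> center G"
    using regular_square_in_center[OF assms(2,4)] .
  have n: "n = card (carrier G) - card (center G)"
    using assms(4) noncentralizer_degree_eq[OF assms(2) one_closed]
    by (simp add: noncentralizer_regular_def centralizer_class_one)
  have dvd: "4 * card (center G) dvd card (carrier G)"
    using four_card_center_dvd_order[OF sq x y xy] by (simp add: order_def)
  obtain k where k: "card (center G) = 2 * k"
    using even_card_center[OF sq x y xy] by (rule evenE)
  have "card (carrier G) > 0" using assms(2) x by (auto simp: card_gt_0_iff)
  with dvd have le: "4 * card (center G) \<le> card (carrier G)" by (rule dvd_imp_le)
  have "8 * k dvd card (carrier G)" using dvd k by simp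
  then have "8 dvd card (carrier G)" by (rule dvd_mult_left)
  then obtain j where j: "card (carrier G) = 8 * j" by (rule dvdE)
  show ?thesis
  proof (intro conjI)
    show "even n" using n j k by presburger
    show "8 dvd card (carrier G)" by fact
    show "n + 2 \<le> card (carrier G)" using n k card_center_pos[OF assms(2)] le by arith
    show "3 * card (carrier G) \<le> 4 * n" using n le by arith
  qed
qed

end
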